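(* Let $\mu$ be a probability measure on $\mathbb R$ with bounded support and let $b=\sup\operatorname{supp}\mu$. Then the map $\Phi:(b,\infty)\to\mathbb R$, $\Phi(x)=\dfrac{G_\mu(x)^2}{G_\mu'(x)}$, is continuous, nonincreasing, and takes values in $[-1,0]$.
   Context: $G_\mu(z)=\int\frac{1}{z-t}\,d\mu(t)$ is the Cauchy transform of $\mu$ for $z\notin\operatorname{supp}\mu$, and $G_\mu'$ denotes its derivative. *)

theory Defs
  imports "HOL-Probability.Probability"
begin

definition measure_support :: "real measure \<Rightarrow> real set" where
  "measure_support M = {x. \<forall>U. open U \<and> x \<in> U \<longrightarrow> emeasure M U > 0}"

definition cauchy_transform :: "real measure \<Rightarrow> real \<Rightarrow> real" where
  "cauchy_transform M z = (LINT t|M. 1 / (z - t))"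

end

theory Submission
  imports Defs
begin

(*
  On (b, \<infinity>) write I\<^sub>n(x) = \<integral> (x - t)\<^sup>-\<^sup>n d\<mu>(t); all integrands are bounded because \<mu> lives
  on (-\<infinity>, b]. Differentiating under the integral, G = I\<^sub>1, G' = -I\<^sub>2 and I\<^sub>2' = -2 I\<^sub>3, so
  \<Phi> = -I\<^sub>1\<^sup>2 / I\<^sub>2. Cauchy-Schwarz for \<mu> gives I\<^sub>n\<^sub>+\<^sub>1\<^sup>2 \<le> I\<^sub>n I\<^sub>n\<^sub>+\<^sub>2: for n = 0 this is I\<^sub>1\<^sup>2 \<le> I\<^sub>2,
  i.e. \<Phi> \<ge> -1, and for n = 1 it makes (I\<^sub>1\<^sup>2 / I\<^sub>2)' = 2 I\<^sub>1 (I\<^sub>1 I\<^sub>3 - I\<^sub>2\<^sup>2) / I\<^sub>2\<^sup>2 nonnegative.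
*)

lemma Taylor_second_order_bound:
  fixes f f' f'' :: "real \<Rightarrow> real"
  assumes f': "\<And>t. t \<in> {a..b} \<Longrightarrow> (f has_real_derivative f' t) (at t)"
    and f'': "\<And>t. t \<in> {a..b} \<Longrightarrow> (f' has_real_derivative f'' t) (at t)"
    and bound: "\<And>t. t \<in> {a..b} \<Longrightarrow> \<bar>f'' t\<bar> \<le> B"
    and uv: "u \<in> {a..b}" "v \<in> {a..b}"
  shows "\<bar>f v - f u - f' u * (v - u)\<bar> \<le> B / 2 * (v - u)\<^sup>2"
proof (cases "v = u")
  case False
  define diff where "diff = (\<lambda>m::nat. if m = 0 then f else if m = 1 then f' else f'')"
  have "\<forall>m t. m < 2 \<and> a \<le> t \<and> t \<le> b \<longrightarrow> (diff m has_real_derivative diff (Suc m) t) (at t)"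
    using f' f'' by (auto simp: diff_def less_2_cases_iff)
  then obtain t where t: "if v < u then v < t \<and> t < u else u < t \<and> t < v"
    and taylor: "f v = (\<Sum>m<2. diff m u / fact m * (v - u) ^ m) + diff 2 t / fact 2 * (v - u)\<^sup>2"
    using Taylor[of 2 diff f a b u v] uv False by (auto simp: diff_def)
  have "t \<in> {a..b}" using t uv by (auto split: if_splits)
  have "f v - f u - f' u * (v - u) = f'' t / 2 * (v - u)\<^sup>2"
    using taylor by (simp add: diff_def eval_nat_numeral)
  also have "\<bar>\<dots>\<bar> \<le> B / 2 * (v - u)\<^sup>2"
    using bound[OF \<open>t \<in> {a..b}\<close>] by (simp add: abs_mult mult_right_mono)
  finally show ?thesis .
qed simp

lemma has_real_derivative_inverse_power:
  fixes t :: real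
  assumes "t \<noteq> 0"
  shows "((\<lambda>t. 1 / t ^ n) has_real_derivative - real n / t ^ Suc n) (at t)"
proof -
  have "((\<lambda>t. inverse t ^ n) has_real_derivative real n * inverse t ^ (n - 1) * - inverse (t\<^sup>2)) (at t)"
    using assms by (auto intro!: derivative_eq_intros simp: power2_eq_square)
  moreover have "real n * inverse t ^ (n - 1) * - inverse (t\<^sup>2) = - real n / t ^ Suc n"
    using assms by (cases n) (simp_all add: field_simps power2_eq_square)
  ultimately show ?thesis by (simp add: power_one_over[symmetric] inverse_eq_divide)
qed

lemma inverse_power_remainder_bound:
  fixes u v d :: real
  assumes "0 < d" "d \<le> u" "d \<le> v"
  shows "\<bar>1 / v ^ n - 1 / u ^ n - - real n / u ^ Suc n * (v - u)\<bar>
           \<le> real (n * Suc n) / d ^ (n + 2) / 2 * (v - u)\<^sup>2"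
proof (rule Taylor_second_order_bound[where a = d and b = "max u v"])
  fix t assume t: "t \<in> {d..max u v}"
  then have "t \<noteq> 0" using assms by auto
  show "((\<lambda>t. 1 / t ^ n) has_real_derivative - real n / t ^ Suc n) (at t)"
    using has_real_derivative_inverse_power[OF \<open>t \<noteq> 0\<close>] .
  show "((\<lambda>t. - real n / t ^ Suc n) has_real_derivative real (n * Suc n) / t ^ (n + 2)) (at t)"
    using DERIV_cmult[OF has_real_derivative_inverse_power[OF \<open>t \<noteq> 0\<close>, of "Suc n"], of "- real n"]
    by (simp add: field_simps)
  show "\<bar>real (n * Suc n) / t ^ (n + 2)\<bar> \<le> real (n * Suc n) / d ^ (n + 2)"
  proof -
    have "d ^ (n + 2) \<le> t ^ (n + 2)" using t assms by (intro power_mono) auto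
    then show ?thesis using t assms by (simp add: divide_left_mono)
  qed
qed (use assms in auto)

context real_distribution
begin

lemma Sup_cdf_sublevel_in_support:
  assumes "\<theta> < 1" and "cdf M d \<le> \<theta>"
  defines "c \<equiv> Sup {s. cdf M s \<le> \<theta>}"
  shows "d \<le> c" and "c \<in> measure_support M"
proof -
  define T where "T = {s. cdf M s \<le> \<theta>}"
  have "eventually (\<lambda>s. \<theta> < cdf M s) at_top"
    using cdf_lim_at_top_prob \<open>\<theta> < 1\<close> by (rule order_tendstoD(1))
  then obtain N where N: "\<And>s. N \<le> s \<Longrightarrow> \<theta> < cdf M s"
    by (auto simp: eventually_at_top_linorder)
  have bdd: "bdd_above T"
    unfolding bdd_above_def T_def by (metis N mem_Collect_eq not_le order_less_imp_le)
  have "d \<in> T" using assms(2) by (simp add: T_def)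
  show "d \<le> c" unfolding c_def T_def[symmetric] using \<open>d \<in> T\<close> bdd by (rule cSup_upper)
  show "c \<in> measure_support M"
    unfolding measure_support_def
  proof (intro CollectI allI impI, elim conjE)
    fix U :: "real set" assume "open U" "c \<in> U"
    then obtain e where "0 < e" and ball: "ball c e \<subseteq> U" by (auto simp: open_contains_ball)
    obtain s where "s \<in> T" "c - e < s"
      using less_cSup_iff[OF _ bdd, of "c - e"] \<open>d \<in> T\<close> \<open>0 < e\<close> by (auto simp: c_def T_def)
    then have "cdf M (c - e) \<le> \<theta>"
      using cdf_nondecreasing[of "c - e" s] by (simp add: T_def)
    moreover have "c + e / 2 \<notin> T"
      using cSup_upper[OF _ bdd, of "c + e / 2"] \<open>0 < e\<close> by (auto simp: c_def T_def)
    then have "\<theta> < cdf M (c + e / 2)" by (simp add: T_def)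
    ultimately have "0 < measure M {c - e<..c + e / 2}"
      using cdf_diff_eq[of "c - e" "c + e / 2"] \<open>0 < e\<close> by simp
    moreover have "{c - e<..c + e / 2} \<subseteq> U"
      using ball \<open>0 < e\<close> by (auto simp: subset_eq dist_real_def)
    then have "emeasure M {c - e<..c + e / 2} \<le> emeasure M U"
      using \<open>open U\<close> by (intro emeasure_mono) auto
    ultimately show "0 < emeasure M U"
      by (simp add: emeasure_eq_measure)
  qed
qed

lemma AE_le_Sup_measure_support:
  assumes "bounded (measure_support M)"
  shows "AE t in M. t \<le> Sup (measure_support M)"
proof -
  define b where "b = Sup (measure_support M)"
  have "cdf M b = 1"
  proof (rule ccontr)
    assume "cdf M b \<noteq> 1"
    then have "cdf M b < 1" using cdf_bounded_prob[of b] by linarith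
    moreover have "continuous (at_right b) (cdf M)" by (rule cdf_is_right_cont)
    ultimately have "eventually (\<lambda>s. cdf M s < 1) (at_right b)"
      unfolding continuous_within by (rule order_tendstoD(2)[rotated])
    then obtain d where "b < d" "cdf M d < 1"
      by (metis eventually_at_right_field dense)
    then have "d \<le> Sup {s. cdf M s \<le> cdf M d}" "Sup {s. cdf M s \<le> cdf M d} \<in> measure_support M"
      using Sup_cdf_sublevel_in_support[of "cdf M d" d] by auto
    moreover have "\<forall>c \<in> measure_support M. c \<le> b"
      using bounded_imp_bdd_above[OF assms] by (auto simp: b_def intro: cSup_upper)
    ultimately show False using \<open>b < d\<close> by fastforce
  qed
  then have "emeasure M {b<..} = 0"
    using prob_compl[of "{..b}"] by (simp add: cdf_def emeasure_eq_measure Compl_eq_Diff_UNIV[symmetric])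
  then show ?thesis
    by (intro AE_I[where N = "{b<..}"]) (auto simp: b_def)
qed

end

definition inverse_moment :: "real measure \<Rightarrow> nat \<Rightarrow> real \<Rightarrow> real" where
  "inverse_moment M n y = (\<integral>t. 1 / (y - t) ^ n \<partial>M)"

lemma cauchy_transform_eq_inverse_moment: "cauchy_transform M = inverse_moment M 1"
  by (simp add: fun_eq_iff cauchy_transform_def inverse_moment_def)

context prob_space
begin

lemma abs_integral_linear_remainder_le:
  fixes f g g' :: "'a \<Rightarrow> real"
  assumes f: "integrable M f" and g: "integrable M g" and g': "integrable M g'"
    and bound: "AE t in M. \<bar>f t - g t - g' t * h\<bar> \<le> B"
  shows "\<bar>(\<integral>t. f t \<partial>M) - (\<integral>t. g t \<partial>M) - (\<integral>t. g' t \<partial>M) * h\<bar> \<le> B"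
proof -
  have "(\<integral>t. f t - g t - g' t * h \<partial>M) = (\<integral>t. f t - g t \<partial>M) - (\<integral>t. g' t \<partial>M) * h"
    using f g g' by (subst Bochner_Integration.integral_diff) auto
  also have "(\<integral>t. f t - g t \<partial>M) = (\<integral>t. f t \<partial>M) - (\<integral>t. g t \<partial>M)"
    using f g by (rule Bochner_Integration.integral_diff)
  finally have "\<bar>(\<integral>t. f t \<partial>M) - (\<integral>t. g t \<partial>M) - (\<integral>t. g' t \<partial>M) * h\<bar>
      = norm (\<integral>t. f t - g t - g' t * h \<partial>M)"
    by simp
  also have "\<dots> \<le> (\<integral>t. norm (f t - g t - g' t * h) \<partial>M)"
    by (rule integral_norm_bound)
  also have "\<dots> \<le> (\<integral>t. B \<partial>M)"
    using f g g' bound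
    by (intro integral_mono_AE integrable_norm integrable_diff integrable_mult_left) auto
  also have "\<dots> = B" using prob_space by simp
  finally show ?thesis .
qed

lemma has_field_derivative_integral_quadratic_remainder:
  fixes k :: "real \<Rightarrow> 'a \<Rightarrow> real"
  assumes "0 < \<delta>"
    and integrable: "\<And>y. \<bar>y - x\<bar> < \<delta> \<Longrightarrow> integrable M (k y)"
    and integrable': "integrable M k'"
    and remainder: "AE t in M. \<forall>y. \<bar>y - x\<bar> < \<delta> \<longrightarrow> \<bar>k y t - k x t - k' t * (y - x)\<bar> \<le> C * (y - x)\<^sup>2"
  shows "((\<lambda>y. \<integral>t. k y t \<partial>M) has_field_derivative (\<integral>t. k' t \<partial>M)) (at x)"
proof -
  let ?F = "\<lambda>y. \<integral>t. k y t \<partial>M"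
  let ?D = "\<integral>t. k' t \<partial>M"
  have "((\<lambda>h. (?F (x + h) - ?F x) / h - ?D) \<longlongrightarrow> 0) (at 0)"
  proof (rule Lim_null_comparison)
    show "((\<lambda>h. \<bar>C\<bar> * \<bar>h\<bar>) \<longlongrightarrow> 0) (at 0)"
      by (auto intro!: tendsto_eq_intros)
    have "eventually (\<lambda>h. h \<noteq> 0 \<and> \<bar>h\<bar> < \<delta>) (at (0::real))"
      unfolding eventually_at using \<open>0 < \<delta>\<close> by (intro exI[of _ \<delta>]) (auto simp: dist_real_def)
    then show "eventually (\<lambda>h. norm ((?F (x + h) - ?F x) / h - ?D) \<le> \<bar>C\<bar> * \<bar>h\<bar>) (at 0)"
    proof eventually_elim
      case (elim h)
      then have h: "h \<noteq> 0" "\<bar>h\<bar> < \<delta>" by auto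
      have "AE t in M. \<bar>k (x + h) t - k x t - k' t * h\<bar> \<le> C * h\<^sup>2"
        using remainder by eventually_elim (use h(2) in \<open>metis add_diff_cancel_left'\<close>)
      then have "\<bar>?F (x + h) - ?F x - ?D * h\<bar> \<le> C * h\<^sup>2"
        using integrable h(2) \<open>0 < \<delta>\<close> integrable'
        by (intro abs_integral_linear_remainder_le) auto
      moreover have "(?F (x + h) - ?F x) / h - ?D = (?F (x + h) - ?F x - ?D * h) / h"
        using h by (simp add: diff_divide_distrib)
      ultimately have "\<bar>(?F (x + h) - ?F x) / h - ?D\<bar> \<le> C * h\<^sup>2 / \<bar>h\<bar>"
        by (simp add: abs_divide divide_right_mono)
      also have "\<dots> = C * \<bar>h\<bar>"
        using h(1) by (metis abs_mult_self_eq nonzero_mult_div_cancel_right power2_eq_square zero_less_abs_iff mult.assoc less_irrefl)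
      also have "\<dots> \<le> \<bar>C\<bar> * \<bar>h\<bar>"
        by (simp add: mult_right_mono)
      finally show ?case by simp
    qed
  qed
  then show ?thesis
    unfolding DERIV_def by (simp add: Lim_null[symmetric])
qed

end

context real_distribution
begin

lemma integrable_inverse_power:
  assumes "AE t in M. t \<le> b" and "b < y"
  shows "integrable M (\<lambda>t. 1 / (y - t) ^ n)"
proof (rule integrable_const_bound[where B = "1 / (y - b) ^ n"])
  show "AE t in M. norm (1 / (y - t) ^ n) \<le> 1 / (y - b) ^ n"
    using assms(1) by eventually_elim (use \<open>b < y\<close> in \<open>auto intro!: divide_left_mono power_mono\<close>)
qed measurable

lemma inverse_moment_pos:
  assumes "AE t in M. t \<le> b" and "b < y"
  shows "0 < inverse_moment M n y"
proof -
  have pos: "AE t in M. 0 < 1 / (y - t) ^ n"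
    using assms(1) by eventually_elim (use \<open>b < y\<close> in auto)
  then have nonneg: "AE t in M. 0 \<le> 1 / (y - t) ^ n"
    by eventually_elim simp
  have "inverse_moment M n y \<noteq> 0"
  proof
    assume "inverse_moment M n y = 0"
    then have "AE t in M. 1 / (y - t) ^ n = 0"
      using integral_nonneg_eq_0_iff_AE[OF integrable_inverse_power[OF assms] nonneg]
      by (simp add: inverse_moment_def)
    with pos have "AE t in M. False" by eventually_elim simp
    then show False by (simp add: AE_False)
  qed
  moreover have "0 \<le> inverse_moment M n y"
    unfolding inverse_moment_def using nonneg by (rule integral_nonneg_AE)
  ultimately show ?thesis by simp
qed

lemma inverse_moment_0 [simp]: "inverse_moment M 0 y = 1"
  using prob_space by (simp add: inverse_moment_def)

lemma inverse_moment_quadratic_nonneg: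
  assumes "AE t in M. t \<le> b" and "b < y"
  shows "0 \<le> inverse_moment M (n + 2) y - 2 * l * inverse_moment M (n + 1) y + l\<^sup>2 * inverse_moment M n y"
proof -
  have int: "integrable M (\<lambda>t. 1 / (y - t) ^ m)" for m
    using integrable_inverse_power[OF assms] .
  have linear: "(\<integral>t. f t - c * g t + d * h t \<partial>M) = (\<integral>t. f t \<partial>M) - c * (\<integral>t. g t \<partial>M) + d * (\<integral>t. h t \<partial>M)"
    if "integrable M f" "integrable M g" "integrable M h" for f g h :: "real \<Rightarrow> real" and c d
    using that by simp
  have "inverse_moment M (n + 2) y - 2 * l * inverse_moment M (n + 1) y + l\<^sup>2 * inverse_moment M n y
      = (\<integral>t. 1 / (y - t) ^ (n + 2) - 2 * l * (1 / (y - t) ^ (n + 1)) + l\<^sup>2 * (1 / (y - t) ^ n) \<partial>M)"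
    unfolding inverse_moment_def by (rule linear[OF int int int, symmetric])
  also have "\<dots> = (\<integral>t. (1 / (y - t)) ^ n * (1 / (y - t) - l)\<^sup>2 \<partial>M)"
  proof -
    have factor: "u ^ (n + 2) - 2 * l * u ^ (n + 1) + l\<^sup>2 * u ^ n = u ^ n * (u - l)\<^sup>2" for u :: real
      by (simp add: power_add power2_eq_square algebra_simps)
    show ?thesis by (simp only: factor flip: power_one_over)
  qed
  also have "\<dots> \<ge> 0"
    using assms(1) by (intro integral_nonneg_AE, eventually_elim) (use \<open>b < y\<close> in auto)
  finally show ?thesis .
qed

lemma inverse_moment_log_convex:
  assumes "AE t in M. t \<le> b" and "b < y"
  shows "(inverse_moment M (n + 1) y)\<^sup>2 \<le> inverse_moment M n y * inverse_moment M (n + 2) y"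
proof -
  let ?I = "\<lambda>m. inverse_moment M m y"
  have pos: "0 < ?I n" using inverse_moment_pos[OF assms] .
  have "0 \<le> ?I (n + 2) - 2 * (?I (n + 1) / ?I n) * ?I (n + 1) + (?I (n + 1) / ?I n)\<^sup>2 * ?I n"
    using inverse_moment_quadratic_nonneg[OF assms] .
  also have "\<dots> = ?I (n + 2) - (?I (n + 1))\<^sup>2 / ?I n"
    using pos by (simp add: power2_eq_square)
  finally show ?thesis
    using pos by (simp add: divide_le_eq mult.commute)
qed

lemma inverse_moment_has_field_derivative:
  assumes "AE t in M. t \<le> b" and "b < x"
  shows "(inverse_moment M n has_field_derivative - real n * inverse_moment M (n + 1) x) (at x)"
proof -
  define \<delta> where "\<delta> = (x - b) / 2"
  have "0 < \<delta>" using assms(2) by (simp add: \<delta>_def)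
  have near: "b < y" if "\<bar>y - x\<bar> < \<delta>" for y
    using that assms(2) unfolding \<delta>_def abs_less_iff by (simp add: field_simps)
  have "((\<lambda>y. \<integral>t. 1 / (y - t) ^ n \<partial>M) has_field_derivative (\<integral>t. - real n / (x - t) ^ Suc n \<partial>M)) (at x)"
  proof (rule has_field_derivative_integral_quadratic_remainder[OF \<open>0 < \<delta>\<close>])
    show "integrable M (\<lambda>t. 1 / (y - t) ^ n)" if "\<bar>y - x\<bar> < \<delta>" for y
      using integrable_inverse_power[OF assms(1) near[OF that]] .
    show "integrable M (\<lambda>t. - real n / (x - t) ^ Suc n)"
      using integrable_mult_right[OF integrable_inverse_power[OF assms, of "Suc n"], of "- real n"] by simp
    show "AE t in M. \<forall>y. \<bar>y - x\<bar> < \<delta> \<longrightarrow>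
        \<bar>1 / (y - t) ^ n - 1 / (x - t) ^ n - - real n / (x - t) ^ Suc n * (y - x)\<bar>
          \<le> real (n * Suc n) / \<delta> ^ (n + 2) / 2 * (y - x)\<^sup>2"
      using assms(1)
    proof (eventually_elim, intro allI impI)
      fix t y assume "t \<le> b" "\<bar>y - x\<bar> < \<delta>"
      then have "\<delta> \<le> x - t" "\<delta> \<le> y - t"
        using assms(2) unfolding \<delta>_def abs_less_iff by (simp_all add: field_simps)
      from inverse_power_remainder_bound[OF \<open>0 < \<delta>\<close> this]
      show "\<bar>1 / (y - t) ^ n - 1 / (x - t) ^ n - - real n / (x - t) ^ Suc n * (y - x)\<bar>
          \<le> real (n * Suc n) / \<delta> ^ (n + 2) / 2 * (y - x)\<^sup>2"
        by simp
    qed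
  qed
  moreover have "(\<integral>t. - real n / (x - t) ^ Suc n \<partial>M) = - real n * inverse_moment M (n + 1) x"
    unfolding inverse_moment_def
    using integral_mult_right_zero[of M "- real n" "\<lambda>t. 1 / (x - t) ^ Suc n"] by simp
  moreover have "(\<lambda>y. \<integral>t. 1 / (y - t) ^ n \<partial>M) = inverse_moment M n"
    by (simp add: fun_eq_iff inverse_moment_def)
  ultimately show ?thesis by simp
qed

lemma inverse_moment_ratio_has_field_derivative:
  assumes "AE t in M. t \<le> b" and "b < x"
  shows "((\<lambda>y. (inverse_moment M 1 y)\<^sup>2 / inverse_moment M 2 y) has_field_derivative
           2 * inverse_moment M 1 x * (inverse_moment M 1 x * inverse_moment M 3 x - (inverse_moment M 2 x)\<^sup>2)
             / (inverse_moment M 2 x)\<^sup>2) (at x)"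
proof -
  let ?I = "\<lambda>n. inverse_moment M n x"
  have "?I 2 \<noteq> 0" using inverse_moment_pos[OF assms, of 2] by simp
  then show ?thesis
    using inverse_moment_has_field_derivative[OF assms, of 1] inverse_moment_has_field_derivative[OF assms, of 2]
    by (auto intro!: derivative_eq_intros simp: field_simps power2_eq_square numeral_2_eq_2 numeral_3_eq_3)
qed

end

theorem mainTheorem5:
  fixes M :: "real measure"
  assumes "prob_space M"
    and "sets M = sets borel"
    and "bounded (measure_support M)"
  defines "b \<equiv> Sup (measure_support M)"
    and "\<Phi> \<equiv> (\<lambda>x. (cauchy_transform M x)\<^sup>2 / deriv (cauchy_transform M) x)"
  shows "continuous_on {b<..} \<Phi>
         \<and> (\<forall>x\<in>{b<..}. \<forall>y\<in>{b<..}. x \<le> y \<longrightarrow> \<Phi> y \<le> \<Phi> x)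
         \<and> (\<forall>x\<in>{b<..}. \<Phi> x \<in> {-1..0})"
proof -
  interpret real_distribution M
    using assms(1,2) by (simp add: real_distribution_def real_distribution_axioms_def)
  have ae: "AE t in M. t \<le> b"
    unfolding b_def using assms(3) by (rule AE_le_Sup_measure_support)
  let ?I = "inverse_moment M"
  define \<psi> where "\<psi> = (\<lambda>y. (?I 1 y)\<^sup>2 / ?I 2 y)"
  have \<Phi>_eq: "\<Phi> x = - \<psi> x" if "b < x" for x
    using DERIV_imp_deriv[OF inverse_moment_has_field_derivative[OF ae that, of 1]]
    by (simp add: \<Phi>_def \<psi>_def cauchy_transform_eq_inverse_moment numeral_2_eq_2)
  have \<psi>_deriv: "\<exists>D. (\<psi> has_field_derivative D) (at x) \<and> 0 \<le> D" if "b < x" for x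
  proof -
    have "(?I 2 x)\<^sup>2 \<le> ?I 1 x * ?I 3 x"
      using inverse_moment_log_convex[OF ae that, of 1] by (simp add: numeral_2_eq_2 numeral_3_eq_3)
    then have "0 \<le> 2 * ?I 1 x * (?I 1 x * ?I 3 x - (?I 2 x)\<^sup>2) / (?I 2 x)\<^sup>2"
      using inverse_moment_pos[OF ae that, of 1] by simp
    then show ?thesis
      using inverse_moment_ratio_has_field_derivative[OF ae that] unfolding \<psi>_def by blast
  qed
  have "continuous_on {b<..} \<psi>"
    using \<psi>_deriv by (intro continuous_at_imp_continuous_on) (auto dest: DERIV_isCont)
  then have "continuous_on {b<..} \<Phi>"
    by (rule continuous_on_eq[OF continuous_on_minus]) (simp add: \<Phi>_eq)
  moreover have "\<psi> x \<le> \<psi> y" if "b < x" "x \<le> y" for x y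
    using \<psi>_deriv that by (intro DERIV_nonneg_imp_nondecreasing[OF \<open>x \<le> y\<close>]) auto
  moreover have "\<psi> x \<in> {0..1}" if "b < x" for x
    using inverse_moment_log_convex[OF ae that, of 0] inverse_moment_pos[OF ae that, of 2]
    by (simp add: \<psi>_def divide_le_eq_1 numeral_2_eq_2)
  ultimately show ?thesis
    by (auto simp: \<Phi>_eq)
qed

end
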